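(* Let $(A,I)$ be a prism and $m,n\ge0$. The map $\delta_\bullet\colon A\to W(A)$, followed by truncation and reduction $W(A)\to W_m(A)\to W_m(A/\phi^m(I_n)A)$, factors through $A/I_{m+n}$, giving a map $\delta_\bullet\colon A/I_{m+n}\to W_m(A/\phi^m(I_n)A)$.
   Context: A $\delta$-ring $A$ has Frobenius lift $\phi(x)=x^p+p\delta(x)$. The map $\delta_\bullet\colon A\to W(A)$ encoding the $\delta$-structure is the ring map with Witt coordinates $(x,\delta(x),\delta_2(x),\dots)$ and ghost coordinates $(x,\phi(x),\phi^2(x),\dots)$, i.e.\ $\phi^n(x)=\sum_{k=0}^np^k\delta_k(x)^{p^{n-k}}$. A prism $(A,I)$: $\delta$-ring, $I$ defining a Cartier divisor, $A$ derived $(p,I)$-complete, $p\in I+\phi(I)A$. $I_n=I\phi(I)\cdots\phi^n(I)A$. $W_m$ denotes $p$-typical Witt vectors with $m+1$ coordinates. *)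

theory Defs
  imports Main "HOL-Library.Poly_Mapping" "HOL-Computational_Algebra.Primes"
begin

definition is_ideal :: "'a::comm_ring_1 set \<Rightarrow> bool" where
  "is_ideal J \<longleftrightarrow> 0 \<in> J \<and> (\<forall>x\<in>J. \<forall>y\<in>J. x + y \<in> J) \<and> (\<forall>a. \<forall>x\<in>J. a * x \<in> J)"

definition ideal_gen :: "'a::comm_ring_1 set \<Rightarrow> 'a set" where
  "ideal_gen S = \<Inter>{J. is_ideal J \<and> S \<subseteq> J}"

definition ideal_prod :: "'a::comm_ring_1 set \<Rightarrow> 'a set \<Rightarrow> 'a set" where
  "ideal_prod I J = ideal_gen {x * y | x y. x \<in> I \<and> y \<in> J}"

text \<open>Residue class of a modulo J, i.e. the element a + J of A/J.\<close>
definition coset :: "'a::comm_ring_1 set \<Rightarrow> 'a \<Rightarrow> 'a set" where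
  "coset J a = {a + j | j. j \<in> J}"

definition delta_ring :: "nat \<Rightarrow> ('a::comm_ring_1 \<Rightarrow> 'a) \<Rightarrow> bool" where
  "delta_ring p \<delta> \<longleftrightarrow> prime p \<and> \<delta> 0 = 0 \<and> \<delta> 1 = 0 \<and>
     (\<forall>x y. \<delta> (x * y) = x ^ p * \<delta> y + y ^ p * \<delta> x + of_nat p * \<delta> x * \<delta> y) \<and>
     (\<forall>x y. \<delta> (x + y) = \<delta> x + \<delta> y
              - (\<Sum>i\<in>{1..<p}. of_nat ((p choose i) div p) * x ^ i * y ^ (p - i)))"

definition frob :: "nat \<Rightarrow> ('a::comm_ring_1 \<Rightarrow> 'a) \<Rightarrow> 'a \<Rightarrow> 'a" where
  "frob p \<delta> x = x ^ p + of_nat p * \<delta> x"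

text \<open>Integer polynomials in countably many variables x_0, x_1, ...; this is
  the free delta-ring on one generator x = x_0 with delta(x_i) = x_(i+1).\<close>
type_synonym zpoly = "(nat \<Rightarrow>\<^sub>0 nat) \<Rightarrow>\<^sub>0 int"

definition Xv :: "nat \<Rightarrow> zpoly" where
  "Xv i = Poly_Mapping.single (Poly_Mapping.single i 1) 1"

definition mpoly_eval :: "(nat \<Rightarrow> 'a::comm_ring_1) \<Rightarrow> zpoly \<Rightarrow> 'a" where
  "mpoly_eval v P = (\<Sum>mon\<in>Poly_Mapping.keys P.
      of_int (Poly_Mapping.lookup P mon) * (\<Prod>i\<in>Poly_Mapping.keys mon. v i ^ Poly_Mapping.lookup mon i))"

definition Phi :: "nat \<Rightarrow> zpoly \<Rightarrow> zpoly" where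
  "Phi p P = mpoly_eval (\<lambda>i. Xv i ^ p + of_nat p * Xv (Suc i)) P"

text \<open>deltaPolys p n = [delta_0, ..., delta_n], determined (in the torsion-free
  ring zpoly) by phi^n(x) = sum_(k<=n) p^k delta_k(x)^(p^(n-k)).\<close>
primrec deltaPolys :: "nat \<Rightarrow> nat \<Rightarrow> zpoly list" where
  "deltaPolys p 0 = [Xv 0]"
| "deltaPolys p (Suc n) = deltaPolys p n @
     [THE Q. of_nat (p ^ Suc n) * Q =
        (Phi p ^^ Suc n) (Xv 0) - (\<Sum>k\<le>n. of_nat (p ^ k) * (deltaPolys p n ! k) ^ (p ^ (Suc n - k)))]"

definition deltaPoly :: "nat \<Rightarrow> nat \<Rightarrow> zpoly" where
  "deltaPoly p k = deltaPolys p k ! k"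

definition delta_k :: "nat \<Rightarrow> ('a::comm_ring_1 \<Rightarrow> 'a) \<Rightarrow> nat \<Rightarrow> 'a \<Rightarrow> 'a" where
  "delta_k p \<delta> k x = mpoly_eval (\<lambda>i. (\<delta> ^^ i) x) (deltaPoly p k)"

text \<open>Derived f-completeness of A as a module over itself:
  Hom(A_f, A) = lim(... -f-> A -f-> A) = 0 and Ext^1(A_f, A) = lim^1 = 0.\<close>
definition derived_complete_elem :: "'a::comm_ring_1 \<Rightarrow> bool" where
  "derived_complete_elem f \<longleftrightarrow>
     (\<forall>y::nat \<Rightarrow> 'a. (\<forall>n. y n = f * y (Suc n)) \<longrightarrow> (\<forall>n. y n = 0)) \<and>
     (\<forall>x::nat \<Rightarrow> 'a. \<exists>y. \<forall>n. x n = y n - f * y (Suc n))"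

definition derived_complete :: "'a::comm_ring_1 set \<Rightarrow> bool" where
  "derived_complete J \<longleftrightarrow> (\<forall>f\<in>J. derived_complete_elem f)"

text \<open>I defines an (effective) Cartier divisor: locally on Spec A it is
  generated by a non-zero-divisor.\<close>
definition cartier_ideal :: "'a::comm_ring_1 set \<Rightarrow> bool" where
  "cartier_ideal I \<longleftrightarrow> is_ideal I \<and>
     (\<exists>F. finite F \<and> ideal_gen F = UNIV \<and>
        (\<forall>f\<in>F. \<exists>g\<in>I. (\<forall>x\<in>I. \<exists>n a. f ^ n * x = g * a) \<and>
                        (\<forall>a. g * a = 0 \<longrightarrow> (\<exists>n. f ^ n * a = 0))))"

definition prism :: "nat \<Rightarrow> ('a::comm_ring_1 \<Rightarrow> 'a) \<Rightarrow> 'a set \<Rightarrow> bool" where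
  "prism p \<delta> I \<longleftrightarrow> delta_ring p \<delta> \<and> cartier_ideal I \<and>
     derived_complete (ideal_gen (insert (of_nat p) I)) \<and>
     of_nat p \<in> {a + b | a b. a \<in> I \<and> b \<in> ideal_gen (frob p \<delta> ` I)}"

primrec Iseq :: "nat \<Rightarrow> ('a::comm_ring_1 \<Rightarrow> 'a) \<Rightarrow> 'a set \<Rightarrow> nat \<Rightarrow> 'a set" where
  "Iseq p \<delta> I 0 = I"
| "Iseq p \<delta> I (Suc n) = ideal_prod (Iseq p \<delta> I n) (ideal_gen ((frob p \<delta> ^^ Suc n) ` I))"

end

(*
  Write I[m,N] for the ideal phi^m(I) phi^(m+1)(I) ... phi^N(I) A, so that I_N = I[0,N] and
  phi^m(I_n) A = I[m,m+n]. The heart of the matter is that delta^k maps I[0,N] into I[k,N]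
  for k <= N. The elements with this property form an ideal, because modulo the ideal
  (z, delta z, ..., delta^k z) the map delta^k ignores the summand z and kills all multiples
  of z. On a generator b phi(w) of I[0,N] with w a generator of I[0,N-1], the congruence
  delta^k(b u) = phi^k(b) delta^k(u) modulo (u, delta u, ..., delta^(k-1) u) and the identity
  delta phi = phi delta reduce the claim to the one for w.
  Finally, the Witt coordinates satisfy delta_k(x + j) - delta_k(x) in (j, delta j, ..., delta^k j).
  This is a universal identity, proved by comparing ghost components in the free delta-ring
  on two generators, which is p-torsion-free. Hence x = y modulo I_(m+n) implies
  delta_k(x) = delta_k(y) modulo I[m,m+n] for k <= m.
*)
theory Submission
  imports Defs
begin

definition is_ring_hom :: "('a::comm_ring_1 \<Rightarrow> 'b::comm_ring_1) \<Rightarrow> bool" where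
  "is_ring_hom h \<longleftrightarrow> h 1 = 1 \<and> (\<forall>x y. h (x + y) = h x + h y) \<and> (\<forall>x y. h (x * y) = h x * h y)"

lemma is_ring_homI:
  "h 1 = 1 \<Longrightarrow> (\<And>x y. h (x + y) = h x + h y) \<Longrightarrow> (\<And>x y. h (x * y) = h x * h y) \<Longrightarrow> is_ring_hom h"
  by (simp add: is_ring_hom_def)

context
  fixes h :: "'a::comm_ring_1 \<Rightarrow> 'b::comm_ring_1"
  assumes h: "is_ring_hom h"
begin

lemma ring_hom_one: "h 1 = 1"
  using h by (simp add: is_ring_hom_def)

lemma ring_hom_add: "h (x + y) = h x + h y"
  using h by (simp add: is_ring_hom_def)

lemma ring_hom_mult: "h (x * y) = h x * h y"
  using h by (simp add: is_ring_hom_def)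

lemma ring_hom_zero: "h 0 = 0"
  using ring_hom_add[of 0 0] by simp

lemma ring_hom_uminus: "h (- x) = - h x"
  using ring_hom_add[of x "- x"] by (simp add: ring_hom_zero eq_neg_iff_add_eq_0 add.commute)

lemma ring_hom_diff: "h (x - y) = h x - h y"
  using ring_hom_add[of x "- y"] by (simp add: ring_hom_uminus)

lemma ring_hom_sum: "h (sum f S) = (\<Sum>i\<in>S. h (f i))"
  by (induction S rule: infinite_finite_induct) (simp_all add: ring_hom_zero ring_hom_add)

lemma ring_hom_prod: "h (prod f S) = (\<Prod>i\<in>S. h (f i))"
  by (induction S rule: infinite_finite_induct) (simp_all add: ring_hom_one ring_hom_mult)

lemma ring_hom_power: "h (x ^ n) = h x ^ n"
  by (induction n) (simp_all add: ring_hom_one ring_hom_mult)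

lemma ring_hom_of_nat: "h (of_nat n) = of_nat n"
  by (induction n) (simp_all add: ring_hom_zero ring_hom_one ring_hom_add)

lemma ring_hom_of_int: "h (of_int c) = of_int c"
proof (cases c rule: int_cases)
  case (neg k)
  then show ?thesis
    using ring_hom_of_nat[of "Suc k"] ring_hom_uminus[of "of_nat (Suc k)"] by simp
qed (simp add: ring_hom_of_nat)

lemmas ring_hom_simps =
  ring_hom_zero ring_hom_one ring_hom_add ring_hom_mult ring_hom_uminus ring_hom_diff
  ring_hom_sum ring_hom_prod ring_hom_power ring_hom_of_nat ring_hom_of_int

end

lemma is_ring_hom_funpow: "is_ring_hom (f :: 'a::comm_ring_1 \<Rightarrow> 'a) \<Longrightarrow> is_ring_hom (f ^^ n)"
  by (induction n) (simp_all add: is_ring_hom_def)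

lemma diff_dvd_power_diff: "(x - y) dvd (x ^ n - y ^ n :: 'a::comm_ring_1)"
  by (metis power_diff_sumr2 dvd_triv_left)

context
  fixes J :: "'a::comm_ring_1 set"
  assumes J: "is_ideal J"
begin

lemma ideal_zero: "0 \<in> J"
  using J by (simp add: is_ideal_def)

lemma ideal_add: "x \<in> J \<Longrightarrow> y \<in> J \<Longrightarrow> x + y \<in> J"
  using J by (simp add: is_ideal_def)

lemma ideal_mult_left: "x \<in> J \<Longrightarrow> a * x \<in> J"
  using J by (simp add: is_ideal_def)

lemma ideal_mult_right: "x \<in> J \<Longrightarrow> x * a \<in> J"
  using ideal_mult_left[of x a] by (simp add: mult.commute)

lemma ideal_uminus: "x \<in> J \<Longrightarrow> - x \<in> J"
  using ideal_mult_left[of x "- 1"] by simp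

lemma ideal_diff: "x \<in> J \<Longrightarrow> y \<in> J \<Longrightarrow> x - y \<in> J"
  using ideal_add[of x "- y"] ideal_uminus[of y] by simp

lemma ideal_mem_of_diff: "x - y \<in> J \<Longrightarrow> y \<in> J \<Longrightarrow> x \<in> J"
  using ideal_add[of "x - y" y] by simp

lemma ideal_sum: "(\<And>i. i \<in> S \<Longrightarrow> f i \<in> J) \<Longrightarrow> sum f S \<in> J"
  by (induction S rule: infinite_finite_induct) (auto simp: ideal_zero ideal_add)

lemma ideal_dvd: "x \<in> J \<Longrightarrow> x dvd y \<Longrightarrow> y \<in> J"
  by (auto simp: dvd_def ideal_mult_right)

lemma ideal_power: "x \<in> J \<Longrightarrow> n > 0 \<Longrightarrow> x ^ n \<in> J"
  by (cases n) (simp_all add: ideal_mult_right)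

lemma ideal_power_diff: "x - y \<in> J \<Longrightarrow> x ^ n - y ^ n \<in> J"
  using ideal_dvd diff_dvd_power_diff by blast

end

lemma is_ideal_ideal_gen: "is_ideal (ideal_gen S)"
  unfolding is_ideal_def ideal_gen_def by blast

lemma ideal_gen_subset: "S \<subseteq> ideal_gen S"
  unfolding ideal_gen_def by blast

lemma ideal_gen_least: "is_ideal J \<Longrightarrow> S \<subseteq> J \<Longrightarrow> ideal_gen S \<subseteq> J"
  unfolding ideal_gen_def by blast

lemma ideal_gen_mono: "S \<subseteq> T \<Longrightarrow> ideal_gen S \<subseteq> ideal_gen T"
  by (meson ideal_gen_least is_ideal_ideal_gen ideal_gen_subset subset_trans)

lemma ideal_gen_ideal: "is_ideal J \<Longrightarrow> ideal_gen J = J"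
  using ideal_gen_least ideal_gen_subset by blast

lemma ring_hom_image_ideal_gen:
  assumes h: "is_ring_hom h"
  shows "h ` ideal_gen S \<subseteq> ideal_gen (h ` S)"
proof -
  have "is_ideal {x. h x \<in> ideal_gen (h ` S)}"
    unfolding is_ideal_def
    by (auto simp: ring_hom_zero[OF h] ring_hom_add[OF h] ring_hom_mult[OF h] ideal_zero ideal_add
        ideal_mult_left is_ideal_ideal_gen)
  moreover have "S \<subseteq> {x. h x \<in> ideal_gen (h ` S)}"
    using ideal_gen_subset by blast
  ultimately show ?thesis
    using ideal_gen_least by blast
qed

lemma ideal_gen_ring_hom_image_ideal_gen:
  assumes h: "is_ring_hom h"
  shows "ideal_gen (h ` ideal_gen S) = ideal_gen (h ` S)"
proof
  show "ideal_gen (h ` ideal_gen S) \<subseteq> ideal_gen (h ` S)"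
    by (rule ideal_gen_least[OF is_ideal_ideal_gen ring_hom_image_ideal_gen[OF h]])
  show "ideal_gen (h ` S) \<subseteq> ideal_gen (h ` ideal_gen S)"
    by (intro ideal_gen_mono image_mono ideal_gen_subset)
qed

lemma is_ideal_preimage_mult: "is_ideal J \<Longrightarrow> is_ideal {u. c * u \<in> J}"
  by (simp add: is_ideal_def distrib_left mult.left_commute[of c])

lemma ideal_prod_ideal_gen:
  "ideal_prod (ideal_gen S) (ideal_gen T) = ideal_gen {s * t | s t. s \<in> S \<and> t \<in> T}"
proof
  let ?M = "ideal_gen {s * t | s t. s \<in> S \<and> t \<in> T}"
  have M: "is_ideal ?M"
    by (rule is_ideal_ideal_gen)
  have st: "x * y \<in> ?M" if x: "x \<in> ideal_gen S" and y: "y \<in> ideal_gen T" for x y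
  proof -
    have "ideal_gen S \<subseteq> {x. \<forall>t\<in>T. x * t \<in> ?M}"
    proof (rule ideal_gen_least)
      show "is_ideal {x. \<forall>t\<in>T. x * t \<in> ?M}"
        unfolding is_ideal_def
        by (auto simp: ideal_zero[OF M] distrib_right ideal_add[OF M] mult.assoc ideal_mult_left[OF M])
      show "S \<subseteq> {x. \<forall>t\<in>T. x * t \<in> ?M}"
        by (auto intro: ideal_gen_subset[THEN subsetD])
    qed
    then have "T \<subseteq> {y. x * y \<in> ?M}"
      using x by blast
    then have "ideal_gen T \<subseteq> {y. x * y \<in> ?M}"
      by (rule ideal_gen_least[OF is_ideal_preimage_mult[OF M]])
    then show ?thesis
      using y by blast
  qed
  show "ideal_prod (ideal_gen S) (ideal_gen T) \<subseteq> ?M"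
    unfolding ideal_prod_def by (rule ideal_gen_least[OF M]) (use st in auto)
  show "?M \<subseteq> ideal_prod (ideal_gen S) (ideal_gen T)"
    unfolding ideal_prod_def by (rule ideal_gen_mono) (use ideal_gen_subset in blast)
qed

lemma mem_coset_iff: "z \<in> coset J u \<longleftrightarrow> z - u \<in> J"
  unfolding coset_def by (auto intro!: exI[of _ "z - u"])

lemma coset_eq_iff:
  assumes J: "is_ideal J"
  shows "coset J u = coset J v \<longleftrightarrow> u - v \<in> J"
proof
  assume "coset J u = coset J v"
  then show "u - v \<in> J"
    using mem_coset_iff[of u J u] mem_coset_iff[of u J v] ideal_zero[OF J] by simp
next
  assume uv: "u - v \<in> J"
  show "coset J u = coset J v"
  proof (rule set_eqI)
    fix z
    have "z - v = (z - u) + (u - v)" and "z - u = (z - v) - (u - v)"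
      by simp_all
    then show "z \<in> coset J u \<longleftrightarrow> z \<in> coset J v"
      unfolding mem_coset_iff using ideal_add[OF J _ uv] ideal_diff[OF J _ uv] by metis
  qed
qed

definition monom_eval :: "(nat \<Rightarrow> 'a::comm_ring_1) \<Rightarrow> (nat \<Rightarrow>\<^sub>0 nat) \<Rightarrow> 'a" where
  "monom_eval v mon = (\<Prod>i\<in>Poly_Mapping.keys mon. v i ^ Poly_Mapping.lookup mon i)"

lemma monom_eval_superset:
  "finite S \<Longrightarrow> Poly_Mapping.keys mon \<subseteq> S \<Longrightarrow>
    monom_eval v mon = (\<Prod>i\<in>S. v i ^ Poly_Mapping.lookup mon i)"
  unfolding monom_eval_def by (rule prod.mono_neutral_left) (auto simp: in_keys_iff)

lemma monom_eval_add: "monom_eval v (a + b) = monom_eval v a * monom_eval v b"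
proof -
  let ?S = "Poly_Mapping.keys a \<union> Poly_Mapping.keys b"
  have S: "finite ?S"
    by simp
  have "monom_eval v (a + b) = (\<Prod>i\<in>?S. v i ^ Poly_Mapping.lookup (a + b) i)"
    by (rule monom_eval_superset[OF S]) (simp add: keys_add)
  also have "\<dots> = (\<Prod>i\<in>?S. v i ^ Poly_Mapping.lookup a i) * (\<Prod>i\<in>?S. v i ^ Poly_Mapping.lookup b i)"
    by (simp add: lookup_add power_add prod.distrib)
  also have "\<dots> = monom_eval v a * monom_eval v b"
    using monom_eval_superset[OF S, of a v] monom_eval_superset[OF S, of b v] by simp
  finally show ?thesis .
qed

lemma mpoly_eval_superset:
  "finite S \<Longrightarrow> Poly_Mapping.keys P \<subseteq> S \<Longrightarrow>
    mpoly_eval v P = (\<Sum>mon\<in>S. of_int (Poly_Mapping.lookup P mon) * monom_eval v mon)"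
  unfolding mpoly_eval_def monom_eval_def[symmetric]
  by (rule sum.mono_neutral_left) (auto simp: in_keys_iff)

lemma mpoly_eval_single: "mpoly_eval v (Poly_Mapping.single mon c) = of_int c * monom_eval v mon"
  by (subst mpoly_eval_superset[of "{mon}"]) auto

lemma zpoly_sum_single: "(P::zpoly) = (\<Sum>mon\<in>Poly_Mapping.keys P. Poly_Mapping.single mon (Poly_Mapping.lookup P mon))"
  by (rule poly_mapping_eqI) (simp add: lookup_sum lookup_single when_def in_keys_iff sum.delta')

lemma mpoly_eval_add: "mpoly_eval v (P + Q) = mpoly_eval v P + mpoly_eval v Q"
proof -
  let ?S = "Poly_Mapping.keys P \<union> Poly_Mapping.keys Q"
  have S: "finite ?S"
    by simp
  have "mpoly_eval v (P + Q) = (\<Sum>mon\<in>?S. of_int (Poly_Mapping.lookup (P + Q) mon) * monom_eval v mon)"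
    by (rule mpoly_eval_superset[OF S]) (simp add: keys_add)
  also have "\<dots> = (\<Sum>mon\<in>?S. of_int (Poly_Mapping.lookup P mon) * monom_eval v mon) +
      (\<Sum>mon\<in>?S. of_int (Poly_Mapping.lookup Q mon) * monom_eval v mon)"
    by (simp add: lookup_add distrib_right sum.distrib)
  also have "\<dots> = mpoly_eval v P + mpoly_eval v Q"
    using mpoly_eval_superset[OF S, of P v] mpoly_eval_superset[OF S, of Q v] by simp
  finally show ?thesis .
qed

lemma mpoly_eval_zero: "mpoly_eval v 0 = 0"
  by (simp add: mpoly_eval_def)

lemma mpoly_eval_sum: "mpoly_eval v (sum f S) = (\<Sum>i\<in>S. mpoly_eval v (f i))"
  by (induction S rule: infinite_finite_induct) (simp_all add: mpoly_eval_zero mpoly_eval_add)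

lemma mpoly_eval_mult_single:
  "mpoly_eval v (Poly_Mapping.single a c * Poly_Mapping.single b d) =
    mpoly_eval v (Poly_Mapping.single a c) * mpoly_eval v (Poly_Mapping.single b d)"
  by (simp add: mult_single mpoly_eval_single monom_eval_add)

lemma mpoly_eval_mult: "mpoly_eval v (P * Q) = mpoly_eval v P * mpoly_eval v Q"
proof -
  let ?P = "\<lambda>a. Poly_Mapping.single a (Poly_Mapping.lookup P a)"
  let ?Q = "\<lambda>b. Poly_Mapping.single b (Poly_Mapping.lookup Q b)"
  have "mpoly_eval v (P * Q) = mpoly_eval v ((\<Sum>a\<in>Poly_Mapping.keys P. ?P a) * (\<Sum>b\<in>Poly_Mapping.keys Q. ?Q b))"
    by (simp flip: zpoly_sum_single)
  also have "\<dots> = (\<Sum>a\<in>Poly_Mapping.keys P. \<Sum>b\<in>Poly_Mapping.keys Q. mpoly_eval v (?P a) * mpoly_eval v (?Q b))"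
    by (simp add: sum_distrib_left sum_distrib_right mpoly_eval_sum mpoly_eval_mult_single)
      (rule sum.swap)
  also have "\<dots> = mpoly_eval v (\<Sum>a\<in>Poly_Mapping.keys P. ?P a) * mpoly_eval v (\<Sum>b\<in>Poly_Mapping.keys Q. ?Q b)"
    by (simp add: sum_product mpoly_eval_sum)
  finally show ?thesis
    by (simp flip: zpoly_sum_single)
qed

lemma mpoly_eval_one: "mpoly_eval v 1 = 1"
  using mpoly_eval_single[of v 0 1] by (simp add: monom_eval_def)

lemma is_ring_hom_mpoly_eval: "is_ring_hom (mpoly_eval v)"
  by (rule is_ring_homI) (simp_all add: mpoly_eval_one mpoly_eval_add mpoly_eval_mult)

lemma mpoly_eval_Xv: "mpoly_eval v (Xv i) = v i"
  by (simp add: Xv_def mpoly_eval_single monom_eval_def)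

lemma Xv_power: "Xv i ^ e = Poly_Mapping.single (Poly_Mapping.single i e) 1"
  by (induction e) (simp_all add: Xv_def mult_single single_add[symmetric])

lemma monom_eval_Xv: "monom_eval Xv mon = Poly_Mapping.single mon 1"
proof -
  have "monom_eval Xv mon =
      (\<Prod>i\<in>Poly_Mapping.keys mon. Poly_Mapping.single (Poly_Mapping.single i (Poly_Mapping.lookup mon i)) 1)"
    by (simp add: monom_eval_def Xv_power)
  also have "\<dots> = Poly_Mapping.single
      (\<Sum>i\<in>Poly_Mapping.keys mon. Poly_Mapping.single i (Poly_Mapping.lookup mon i)) 1"
    by (induction rule: finite_induct[OF finite_keys]) (simp_all add: mult_single)
  also have "(\<Sum>i\<in>Poly_Mapping.keys mon. Poly_Mapping.single i (Poly_Mapping.lookup mon i)) = mon"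
    by (rule poly_mapping_eqI) (simp add: lookup_sum lookup_single when_def in_keys_iff sum.delta')
  finally show ?thesis .
qed

lemma mpoly_eval_Xv_id: "mpoly_eval Xv P = P"
proof -
  have "mpoly_eval Xv P = (\<Sum>mon\<in>Poly_Mapping.keys P. Poly_Mapping.single mon (Poly_Mapping.lookup P mon))"
    unfolding mpoly_eval_def monom_eval_def[symmetric] monom_eval_Xv
    by (simp flip: single_of_int add: mult_single)
  then show ?thesis
    by (simp flip: zpoly_sum_single)
qed

lemma ring_hom_mpoly_eval: "is_ring_hom h \<Longrightarrow> h (mpoly_eval v P) = mpoly_eval (h \<circ> v) P"
  by (simp add: mpoly_eval_def ring_hom_sum ring_hom_mult ring_hom_of_int ring_hom_prod ring_hom_power)

lemma zpoly_induct [case_names const var add mult]: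
  assumes const: "\<And>c. Q (of_int c)" and var: "\<And>i. Q (Xv i)"
    and add: "\<And>a b. Q a \<Longrightarrow> Q b \<Longrightarrow> Q (a + b)" and mult: "\<And>a b. Q a \<Longrightarrow> Q b \<Longrightarrow> Q (a * b)"
  shows "Q (P::zpoly)"
proof -
  have sum: "Q (sum f S)" if "\<And>i. i \<in> S \<Longrightarrow> Q (f i)" for f and S :: "'b set"
    using that by (induction S rule: infinite_finite_induct) (auto intro: add simp: const[of 0, simplified])
  have prod: "Q (prod f S)" if "\<And>i. i \<in> S \<Longrightarrow> Q (f i)" for f and S :: "'b set"
    using that by (induction S rule: infinite_finite_induct) (auto intro: mult simp: const[of 1, simplified])
  have power: "Q (x ^ n)" if "Q x" for x n
    using that by (induction n) (auto intro: mult simp: const[of 1, simplified])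
  have "Q (mpoly_eval Xv P)"
    unfolding mpoly_eval_def by (intro sum mult const prod power var)
  then show ?thesis
    by (simp add: mpoly_eval_Xv_id)
qed

lemma mem_ideal_gen_Xv_cancel_of_nat:
  assumes "of_nat c * P \<in> ideal_gen (Xv ` Z)" and "c > 0"
  shows "P \<in> ideal_gen (Xv ` Z)"
proof -
  define s where "s = mpoly_eval (\<lambda>j. if j \<in> Z then 0 else Xv j)"
  have s: "is_ring_hom s"
    unfolding s_def by (rule is_ring_hom_mpoly_eval)
  let ?K = "ideal_gen (Xv ` Z)"
  have K: "is_ideal ?K"
    by (rule is_ideal_ideal_gen)
  have "is_ideal {Q. s Q = 0}"
    unfolding is_ideal_def by (auto simp: ring_hom_zero[OF s] ring_hom_add[OF s] ring_hom_mult[OF s])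
  moreover have "Xv ` Z \<subseteq> {Q. s Q = 0}"
    by (auto simp: s_def mpoly_eval_Xv)
  ultimately have s_K: "s Q = 0" if "Q \<in> ?K" for Q
    using ideal_gen_least that by blast
  have "Q - s Q \<in> ?K" for Q
  proof (induction Q rule: zpoly_induct)
    case (const c)
    then show ?case
      by (simp add: ring_hom_of_int[OF s] ideal_zero[OF K])
  next
    case (var i)
    then show ?case
      by (cases "i \<in> Z") (auto simp: s_def mpoly_eval_Xv ideal_zero[OF K] ideal_gen_subset[THEN subsetD])
  next
    case (add a b)
    have "a + b - s (a + b) = (a - s a) + (b - s b)"
      by (simp add: ring_hom_add[OF s])
    then show ?case
      by (simp only: ideal_add[OF K add.IH])
  next
    case (mult a b)
    have "a * b - s (a * b) = a * (b - s b) + (a - s a) * s b"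
      by (simp add: ring_hom_mult[OF s] algebra_simps)
    then show ?case
      by (simp only: ideal_add[OF K ideal_mult_left[OF K mult.IH(2)] ideal_mult_right[OF K mult.IH(1)]])
  qed
  moreover have "s P = 0"
    using s_K[OF assms(1)] \<open>c > 0\<close> by (simp add: ring_hom_mult[OF s] ring_hom_of_nat[OF s])
  ultimately show ?thesis
    by (metis diff_zero)
qed

section \<open>The binomial theorem modulo p\<close>

definition cross_terms :: "nat \<Rightarrow> 'a::comm_ring_1 \<Rightarrow> 'a \<Rightarrow> 'a" where
  "cross_terms p x y = (\<Sum>i\<in>{1..<p}. of_nat ((p choose i) div p) * x ^ i * y ^ (p - i))"

lemma power_add_prime:
  fixes x y :: "'a::comm_ring_1"
  assumes "prime p"
  shows "(x + y) ^ p = x ^ p + y ^ p + of_nat p * cross_terms p x y"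
proof -
  have p: "p \<ge> 1"
    using assms prime_gt_0_nat by (simp add: Suc_leI)
  have "(x + y) ^ p = (\<Sum>k\<le>p. of_nat (p choose k) * x ^ k * y ^ (p - k))"
    by (simp add: binomial_ring)
  also have "{..p} = insert 0 (insert p {1..<p})"
    using p by auto
  also have "(\<Sum>k\<in>insert 0 (insert p {1..<p}). of_nat (p choose k) * x ^ k * y ^ (p - k)) =
      y ^ p + (x ^ p + (\<Sum>k\<in>{1..<p}. of_nat (p choose k) * x ^ k * y ^ (p - k)))"
    using p by (subst sum.insert; auto)+
  also have "(\<Sum>k\<in>{1..<p}. of_nat (p choose k) * x ^ k * y ^ (p - k)) = of_nat p * cross_terms p x y"
    unfolding cross_terms_def sum_distrib_left
  proof (rule sum.cong)
    fix k
    assume "k \<in> {1..<p}"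
    then have "p dvd (p choose k)"
      using assms by (intro dvd_choose_prime) auto
    then have "(of_nat (p choose k) :: 'a) = of_nat p * of_nat ((p choose k) div p)"
      by (simp flip: of_nat_mult)
    then show "of_nat (p choose k) * x ^ k * y ^ (p - k) =
        of_nat p * (of_nat ((p choose k) div p) * x ^ k * y ^ (p - k))"
      by (simp add: mult.assoc)
  qed simp
  finally show ?thesis
    by (simp add: algebra_simps)
qed

lemma dvd_cross_terms: "y dvd cross_terms p x y"
  unfolding cross_terms_def by (intro dvd_sum dvd_mult dvd_power) auto

lemma ring_hom_cross_terms: "is_ring_hom h \<Longrightarrow> h (cross_terms p x y) = cross_terms p (h x) (h y)"
  by (simp add: cross_terms_def ring_hom_sum ring_hom_mult ring_hom_power ring_hom_of_nat)

lemma of_nat_prime_dvd_of_int_power_diff: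
  assumes "prime p"
  shows "(of_nat p :: 'a::comm_ring_1) dvd of_int c ^ p - of_int c"
proof (induction c rule: int_induct[where k = 0])
  case base
  then show ?case
    using assms prime_gt_0_nat by (simp add: power_0_left)
next
  case (step1 i)
  have eq: "(of_int (i + 1) :: 'a) ^ p - of_int (i + 1) =
      (of_int i ^ p - of_int i) + of_nat p * cross_terms p (of_int i) 1"
    using power_add_prime[OF assms, of "of_int i :: 'a" 1] by (simp add: algebra_simps)
  show ?case
    unfolding eq by (intro dvd_add dvd_triv_left step1)
next
  case (step2 i)
  have "(of_int i :: 'a) ^ p = (of_int (i - 1) + 1) ^ p"
    by simp
  also have "\<dots> = of_int (i - 1) ^ p + 1 + of_nat p * cross_terms p (of_int (i - 1)) 1"
    using power_add_prime[OF assms, of "of_int (i - 1) :: 'a" 1] by simp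
  finally have eq: "(of_int (i - 1) :: 'a) ^ p - of_int (i - 1) =
      (of_int i ^ p - of_int i) - of_nat p * cross_terms p (of_int (i - 1)) 1"
    by (simp add: algebra_simps)
  show ?case
    unfolding eq by (intro dvd_diff dvd_triv_left step2)
qed

lemma of_nat_power_dvd_power_diff_step:
  fixes a b :: "'a::comm_ring_1"
  assumes "of_nat (p ^ Suc j) dvd a - b"
  shows "of_nat (p ^ Suc (Suc j)) dvd a ^ p - b ^ p"
proof -
  obtain c where c: "a - b = of_nat (p ^ Suc j) * c"
    using assms by (auto simp: dvd_def)
  have p_dvd: "of_nat p dvd a - b"
    unfolding c by (simp add: of_nat_mult mult.assoc)
  let ?S = "\<Sum>i<p. b ^ (p - Suc i) * a ^ i"
  \<comment> \<open>modulo a - b every summand of ?S is b^(p-1), so ?S is divisible by p\<close>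
  have "?S - of_nat p * b ^ (p - 1) = (\<Sum>i<p. b ^ (p - Suc i) * (a ^ i - b ^ i))"
  proof -
    have "(\<Sum>i<p. b ^ (p - Suc i) * b ^ i) = (\<Sum>i<p. b ^ (p - 1))"
      by (rule sum.cong) (auto simp flip: power_add)
    then show ?thesis
      by (simp add: sum_subtractf right_diff_distrib)
  qed
  moreover have "of_nat p dvd (\<Sum>i<p. b ^ (p - Suc i) * (a ^ i - b ^ i))"
    by (intro dvd_sum dvd_mult dvd_trans[OF p_dvd diff_dvd_power_diff])
  ultimately have "of_nat p dvd ?S - of_nat p * b ^ (p - 1) + of_nat p * b ^ (p - 1)"
    by (intro dvd_add dvd_triv_left) simp_all
  then obtain t where t: "?S = of_nat p * t"
    by (auto simp: dvd_def)
  have "a ^ p - b ^ p = of_nat (p ^ Suc (Suc j)) * (c * t)"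
    unfolding power_diff_sumr2 t c by (simp add: algebra_simps)
  then show ?thesis
    by simp
qed

lemma of_nat_power_dvd_power_diff:
  fixes a b :: "'a::comm_ring_1"
  assumes "of_nat p dvd a - b"
  shows "of_nat (p ^ Suc e) dvd a ^ p ^ e - b ^ p ^ e"
proof (induction e)
  case 0
  then show ?case
    using assms by simp
next
  case (Suc e)
  then show ?case
    using of_nat_power_dvd_power_diff_step[OF Suc] by (simp add: power_mult[symmetric] mult.commute)
qed

definition delta_ideal :: "('a::comm_ring_1 \<Rightarrow> 'a) \<Rightarrow> nat \<Rightarrow> 'a \<Rightarrow> 'a set" where
  "delta_ideal \<delta> k a = ideal_gen ((\<lambda>i. (\<delta> ^^ i) a) ` {..<k})"

lemma is_ideal_delta_ideal: "is_ideal (delta_ideal \<delta> k a)"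
  by (simp add: delta_ideal_def is_ideal_ideal_gen)

lemma delta_ideal_mono: "k \<le> l \<Longrightarrow> delta_ideal \<delta> k a \<subseteq> delta_ideal \<delta> l a"
  unfolding delta_ideal_def by (rule ideal_gen_mono, rule image_mono) auto

lemma delta_ideal_Suc_subset: "delta_ideal \<delta> k a \<subseteq> delta_ideal \<delta> (Suc k) a"
  by (rule delta_ideal_mono) simp

lemma delta_iter_mem_delta_ideal: "i < k \<Longrightarrow> (\<delta> ^^ i) a \<in> delta_ideal \<delta> k a"
  unfolding delta_ideal_def by (rule subsetD[OF ideal_gen_subset]) simp

lemma delta_ideal_least:
  "is_ideal J \<Longrightarrow> (\<And>i. i < k \<Longrightarrow> (\<delta> ^^ i) a \<in> J) \<Longrightarrow> delta_ideal \<delta> k a \<subseteq> J"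
  unfolding delta_ideal_def by (rule ideal_gen_least) auto

locale delta_ring_struct =
  fixes p :: nat and \<delta> :: "'a::comm_ring_1 \<Rightarrow> 'a"
  assumes delta_ring: "delta_ring p \<delta>"
begin

abbreviation \<phi> :: "'a \<Rightarrow> 'a" where
  "\<phi> \<equiv> frob p \<delta>"

lemma prime_p: "prime p"
  using delta_ring by (simp add: delta_ring_def)

lemma p_pos: "p > 0"
  using prime_p prime_gt_0_nat by blast

lemma delta_zero: "\<delta> 0 = 0"
  using delta_ring by (simp add: delta_ring_def)

lemma delta_one: "\<delta> 1 = 0"
  using delta_ring by (simp add: delta_ring_def)

lemma delta_mult: "\<delta> (x * y) = x ^ p * \<delta> y + y ^ p * \<delta> x + of_nat p * \<delta> x * \<delta> y"
  using delta_ring by (simp add: delta_ring_def)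

lemma delta_add: "\<delta> (x + y) = \<delta> x + \<delta> y - cross_terms p x y"
  using delta_ring by (simp add: delta_ring_def cross_terms_def)

lemma delta_mult_frob: "\<delta> (x * y) = \<phi> x * \<delta> y + y ^ p * \<delta> x"
  by (simp add: delta_mult frob_def algebra_simps)

lemma is_ring_hom_frob: "is_ring_hom \<phi>"
proof (rule is_ring_homI)
  show "\<phi> 1 = 1"
    by (simp add: frob_def delta_one)
  show "\<phi> (x + y) = \<phi> x + \<phi> y" for x y
    by (simp add: frob_def power_add_prime[OF prime_p] delta_add algebra_simps)
  show "\<phi> (x * y) = \<phi> x * \<phi> y" for x y
    by (simp add: frob_def delta_mult algebra_simps power_mult_distrib)
qed

lemma is_ring_hom_frob_iter: "is_ring_hom (\<phi> ^^ n)"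
  by (rule is_ring_hom_funpow[OF is_ring_hom_frob])

lemma delta_mem_delta_ideal:
  assumes "w \<in> delta_ideal \<delta> k a"
  shows "\<delta> w \<in> delta_ideal \<delta> (Suc k) a"
proof -
  let ?V = "delta_ideal \<delta> k a" and ?V' = "delta_ideal \<delta> (Suc k) a"
  have V: "is_ideal ?V" and V': "is_ideal ?V'"
    by (simp_all add: is_ideal_delta_ideal)
  have V_V': "?V \<subseteq> ?V'"
    by (rule delta_ideal_Suc_subset)
  have "is_ideal {w \<in> ?V. \<delta> w \<in> ?V'}"
    unfolding is_ideal_def
  proof (intro conjI ballI allI)
    show "0 \<in> {w \<in> ?V. \<delta> w \<in> ?V'}"
      by (simp add: delta_zero ideal_zero[OF V] ideal_zero[OF V'])
  next
    fix u v
    assume u: "u \<in> {w \<in> ?V. \<delta> w \<in> ?V'}" and v: "v \<in> {w \<in> ?V. \<delta> w \<in> ?V'}"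
    have "cross_terms p u v \<in> ?V'"
      using v V_V' by (blast intro: ideal_dvd[OF V'] dvd_cross_terms)
    then show "u + v \<in> {w \<in> ?V. \<delta> w \<in> ?V'}"
      using u v by (simp add: delta_add ideal_add[OF V] ideal_add[OF V'] ideal_diff[OF V'])
  next
    fix r u
    assume u: "u \<in> {w \<in> ?V. \<delta> w \<in> ?V'}"
    have "u ^ p \<in> ?V'"
      using u V_V' p_pos by (blast intro: ideal_power[OF V'])
    then show "r * u \<in> {w \<in> ?V. \<delta> w \<in> ?V'}"
      using u by (simp add: delta_mult ideal_mult_left[OF V] ideal_add[OF V']
          ideal_mult_left[OF V'] ideal_mult_right[OF V'])
  qed
  moreover have "(\<delta> ^^ i) a \<in> {w \<in> ?V. \<delta> w \<in> ?V'}" if "i < k" for i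
    using that delta_iter_mem_delta_ideal[of i k \<delta> a] delta_iter_mem_delta_ideal[of "Suc i" "Suc k" \<delta> a] by simp
  ultimately show ?thesis
    using delta_ideal_least assms by blast
qed

lemma delta_add_mem_delta_ideal:
  assumes "w \<in> delta_ideal \<delta> k a"
  shows "\<delta> (x + w) - \<delta> x \<in> delta_ideal \<delta> (Suc k) a"
proof -
  have V': "is_ideal (delta_ideal \<delta> (Suc k) a)"
    by (rule is_ideal_delta_ideal)
  have "w \<in> delta_ideal \<delta> (Suc k) a"
    using assms delta_ideal_Suc_subset by blast
  then have "cross_terms p x w \<in> delta_ideal \<delta> (Suc k) a"
    by (rule ideal_dvd[OF V' _ dvd_cross_terms])
  then show ?thesis
    using delta_mem_delta_ideal[OF assms] by (simp add: delta_add ideal_diff[OF V'])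
qed

lemma delta_iter_add: "(\<delta> ^^ k) (x + y) - (\<delta> ^^ k) x \<in> delta_ideal \<delta> (Suc k) y"
proof (induction k)
  case 0
  then show ?case
    using delta_iter_mem_delta_ideal[of 0 1 \<delta> y] by simp
next
  case (Suc k)
  then show ?case
    using delta_add_mem_delta_ideal[OF Suc, of "(\<delta> ^^ k) x"] by simp
qed

lemma delta_iter_mult: "(\<delta> ^^ k) (r * z) \<in> delta_ideal \<delta> (Suc k) z"
proof (induction k)
  case 0
  have "z \<in> delta_ideal \<delta> 1 z"
    using delta_iter_mem_delta_ideal[of 0 1 \<delta> z] by simp
  then show ?case
    by (simp add: ideal_mult_left[OF is_ideal_delta_ideal])
next
  case (Suc k)
  then show ?case
    using delta_mem_delta_ideal by simp
qed

lemma frob_iter_mem_delta_ideal: "(\<phi> ^^ k) a \<in> delta_ideal \<delta> (Suc k) a"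
proof (induction k)
  case 0
  then show ?case
    using delta_iter_mem_delta_ideal[of 0 1 \<delta> a] by simp
next
  case (Suc k)
  let ?V = "delta_ideal \<delta> (Suc (Suc k)) a"
  have V: "is_ideal ?V"
    by (rule is_ideal_delta_ideal)
  have "(\<phi> ^^ k) a \<in> ?V"
    using Suc delta_ideal_Suc_subset by blast
  moreover have "\<delta> ((\<phi> ^^ k) a) \<in> ?V"
    using delta_mem_delta_ideal[OF Suc] .
  moreover have "(\<phi> ^^ Suc k) a = ((\<phi> ^^ k) a) ^ p + of_nat p * \<delta> ((\<phi> ^^ k) a)"
    by (simp add: frob_def[of p \<delta> "(\<phi> ^^ k) a"])
  ultimately show ?case
    using ideal_add[OF V] ideal_power[OF V _ p_pos] ideal_mult_left[OF V] by metis
qed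

lemma delta_iter_mult_frob_iter:
  "(\<delta> ^^ k) (b * u) - (\<phi> ^^ k) b * (\<delta> ^^ k) u \<in> delta_ideal \<delta> k u"
proof (induction k)
  case 0
  then show ?case
    by (simp add: ideal_zero[OF is_ideal_delta_ideal])
next
  case (Suc k)
  let ?V = "delta_ideal \<delta> (Suc k) u" and ?c = "(\<phi> ^^ k) b" and ?v = "(\<delta> ^^ k) u"
  have V: "is_ideal ?V"
    by (rule is_ideal_delta_ideal)
  have "\<delta> (?c * ?v + ((\<delta> ^^ k) (b * u) - ?c * ?v)) - \<delta> (?c * ?v) \<in> ?V"
    by (rule delta_add_mem_delta_ideal[OF Suc])
  moreover have "\<delta> (?c * ?v) - \<phi> ?c * \<delta> ?v \<in> ?V"
    using delta_iter_mem_delta_ideal[of k "Suc k" \<delta> u] p_pos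
    by (simp add: delta_mult_frob ideal_mult_right[OF V] ideal_power[OF V])
  moreover have "(\<delta> ^^ Suc k) (b * u) - (\<phi> ^^ Suc k) b * (\<delta> ^^ Suc k) u =
      (\<delta> (?c * ?v + ((\<delta> ^^ k) (b * u) - ?c * ?v)) - \<delta> (?c * ?v)) + (\<delta> (?c * ?v) - \<phi> ?c * \<delta> ?v)"
    by simp
  ultimately show ?case
    using ideal_add[OF V] by metis
qed

end

definition delta_hom :: "('a::comm_ring_1 \<Rightarrow> 'a) \<Rightarrow> ('b::comm_ring_1 \<Rightarrow> 'b) \<Rightarrow> ('a \<Rightarrow> 'b) \<Rightarrow> bool" where
  "delta_hom \<delta>\<^sub>1 \<delta>\<^sub>2 h \<longleftrightarrow> is_ring_hom h \<and> (\<forall>x. h (\<delta>\<^sub>1 x) = \<delta>\<^sub>2 (h x))"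

context
  fixes \<delta>\<^sub>1 :: "'a::comm_ring_1 \<Rightarrow> 'a" and \<delta>\<^sub>2 :: "'b::comm_ring_1 \<Rightarrow> 'b" and h :: "'a \<Rightarrow> 'b"
  assumes h: "delta_hom \<delta>\<^sub>1 \<delta>\<^sub>2 h"
begin

lemma delta_hom_ring_hom: "is_ring_hom h"
  using h by (simp add: delta_hom_def)

lemma delta_hom_delta_iter: "h ((\<delta>\<^sub>1 ^^ i) x) = (\<delta>\<^sub>2 ^^ i) (h x)"
  using h by (induction i) (simp_all add: delta_hom_def)

lemma delta_hom_frob: "h (frob p \<delta>\<^sub>1 x) = frob p \<delta>\<^sub>2 (h x)"
  using h by (simp add: delta_hom_def frob_def ring_hom_simps[OF delta_hom_ring_hom])

lemma delta_hom_frob_iter: "h ((frob p \<delta>\<^sub>1 ^^ n) x) = (frob p \<delta>\<^sub>2 ^^ n) (h x)"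
  by (induction n) (simp_all add: delta_hom_frob)

lemma delta_hom_delta_k: "h (delta_k p \<delta>\<^sub>1 k x) = delta_k p \<delta>\<^sub>2 k (h x)"
  unfolding delta_k_def
  by (simp add: ring_hom_mpoly_eval[OF delta_hom_ring_hom] comp_def delta_hom_delta_iter)

lemma delta_hom_image_delta_ideal: "h ` delta_ideal \<delta>\<^sub>1 k x \<subseteq> delta_ideal \<delta>\<^sub>2 k (h x)"
proof -
  have "h ` delta_ideal \<delta>\<^sub>1 k x \<subseteq> ideal_gen (h ` (\<lambda>i. (\<delta>\<^sub>1 ^^ i) x) ` {..<k})"
    unfolding delta_ideal_def by (rule ring_hom_image_ideal_gen[OF delta_hom_ring_hom])
  also have "h ` (\<lambda>i. (\<delta>\<^sub>1 ^^ i) x) ` {..<k} = (\<lambda>i. (\<delta>\<^sub>2 ^^ i) (h x)) ` {..<k}"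
    by (simp add: image_image delta_hom_delta_iter)
  finally show ?thesis
    by (simp add: delta_ideal_def)
qed

end

section \<open>The free delta-ring on a set of variables\<close>

text \<open>
  For a map \<sigma> on variables, zpoly carries the Frobenius lift x_i \<mapsto> x_i^p + p x_(\<sigma> i),
  hence, being p-torsion-free, a unique delta-structure with \<delta>(x_i) = x_(\<sigma> i).
  For \<sigma> = Suc this is the free delta-ring on x_0, for \<sigma> j = j + 2 the free delta-ring
  on x_0 and x_1.
\<close>

definition zpoly_frob :: "nat \<Rightarrow> (nat \<Rightarrow> nat) \<Rightarrow> zpoly \<Rightarrow> zpoly" where
  "zpoly_frob p \<sigma> = mpoly_eval (\<lambda>i. Xv i ^ p + of_nat p * Xv (\<sigma> i))"

definition zpoly_delta :: "nat \<Rightarrow> (nat \<Rightarrow> nat) \<Rightarrow> zpoly \<Rightarrow> zpoly" where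
  "zpoly_delta p \<sigma> P = (THE Q. of_nat p * Q = zpoly_frob p \<sigma> P - P ^ p)"

lemma Phi_eq_zpoly_frob: "Phi p = zpoly_frob p Suc"
  by (simp add: fun_eq_iff Phi_def zpoly_frob_def)

lemma is_ring_hom_zpoly_frob: "is_ring_hom (zpoly_frob p \<sigma>)"
  unfolding zpoly_frob_def by (rule is_ring_hom_mpoly_eval)

lemma zpoly_frob_Xv: "zpoly_frob p \<sigma> (Xv i) = Xv i ^ p + of_nat p * Xv (\<sigma> i)"
  by (simp add: zpoly_frob_def mpoly_eval_Xv)

lemma of_nat_prime_dvd_zpoly_frob:
  assumes "prime p"
  shows "of_nat p dvd zpoly_frob p \<sigma> P - P ^ p"
proof (induction P rule: zpoly_induct)
  case (const c)
  have "zpoly_frob p \<sigma> (of_int c) - of_int c ^ p = - (of_int c ^ p - of_int c)"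
    by (simp add: ring_hom_of_int[OF is_ring_hom_zpoly_frob])
  then show ?case
    using of_nat_prime_dvd_of_int_power_diff[OF assms, of c] by (simp only: dvd_minus_iff)
next
  case (var i)
  then show ?case
    by (simp add: zpoly_frob_Xv)
next
  case (add a b)
  then obtain u w where u: "zpoly_frob p \<sigma> a = a ^ p + of_nat p * u"
    and w: "zpoly_frob p \<sigma> b = b ^ p + of_nat p * w"
    by (metis dvd_def diff_eq_eq add.commute)
  have "zpoly_frob p \<sigma> (a + b) - (a + b) ^ p = of_nat p * (u + w - cross_terms p a b)"
    by (simp add: ring_hom_add[OF is_ring_hom_zpoly_frob] u w power_add_prime[OF assms] algebra_simps)
  then show ?case
    by simp
next
  case (mult a b)
  then obtain u w where u: "zpoly_frob p \<sigma> a = a ^ p + of_nat p * u"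
    and w: "zpoly_frob p \<sigma> b = b ^ p + of_nat p * w"
    by (metis dvd_def diff_eq_eq add.commute)
  have "zpoly_frob p \<sigma> (a * b) - (a * b) ^ p = of_nat p * (a ^ p * w + b ^ p * u + of_nat p * u * w)"
    by (simp add: ring_hom_mult[OF is_ring_hom_zpoly_frob] u w algebra_simps power_mult_distrib)
  then show ?case
    by simp
qed

lemma zpoly_delta_eq:
  assumes "prime p"
  shows "of_nat p * zpoly_delta p \<sigma> P = zpoly_frob p \<sigma> P - P ^ p"
proof -
  obtain Q where Q: "zpoly_frob p \<sigma> P - P ^ p = of_nat p * Q"
    using of_nat_prime_dvd_zpoly_frob[OF assms] by (auto simp: dvd_def)
  have "p > 0"
    using assms prime_gt_0_nat by blast
  show ?thesis
    unfolding zpoly_delta_def by (rule theI[of _ Q]) (use Q \<open>p > 0\<close> in auto)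
qed

lemma zpoly_delta_unique:
  assumes "prime p" and "of_nat p * Q = zpoly_frob p \<sigma> P - P ^ p"
  shows "zpoly_delta p \<sigma> P = Q"
proof -
  have "of_nat p * zpoly_delta p \<sigma> P = of_nat p * Q"
    using zpoly_delta_eq[OF assms(1)] assms(2) by simp
  then show ?thesis
    using prime_gt_0_nat[OF assms(1)] by simp
qed

lemma frob_zpoly_delta: "prime p \<Longrightarrow> frob p (zpoly_delta p \<sigma>) = zpoly_frob p \<sigma>"
  by (simp add: fun_eq_iff frob_def zpoly_delta_eq)

lemma delta_ring_zpoly_delta:
  assumes "prime p"
  shows "delta_ring p (zpoly_delta p \<sigma>)"
proof -
  let ?D = "zpoly_delta p \<sigma>" and ?F = "zpoly_frob p \<sigma>"
  have F: "?F x = x ^ p + of_nat p * ?D x" for x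
    using zpoly_delta_eq[OF assms, of \<sigma> x] by (simp add: algebra_simps)
  have "?D 0 = 0" and "?D 1 = 0"
    using prime_gt_0_nat[OF assms]
    by (auto intro!: zpoly_delta_unique[OF assms] simp: ring_hom_zero[OF is_ring_hom_zpoly_frob]
        ring_hom_one[OF is_ring_hom_zpoly_frob])
  moreover have "?D (x * y) = x ^ p * ?D y + y ^ p * ?D x + of_nat p * ?D x * ?D y" for x y
    by (rule zpoly_delta_unique[OF assms])
      (simp add: ring_hom_mult[OF is_ring_hom_zpoly_frob] F algebra_simps power_mult_distrib)
  moreover have "?D (x + y) = ?D x + ?D y - cross_terms p x y" for x y
    by (rule zpoly_delta_unique[OF assms])
      (simp add: ring_hom_add[OF is_ring_hom_zpoly_frob] F power_add_prime[OF assms] algebra_simps)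
  ultimately show ?thesis
    using assms by (simp add: delta_ring_def cross_terms_def)
qed

lemma zpoly_delta_Xv: "prime p \<Longrightarrow> zpoly_delta p \<sigma> (Xv i) = Xv (\<sigma> i)"
  by (rule zpoly_delta_unique) (simp_all add: zpoly_frob_Xv)

lemma zpoly_delta_iter_Xv: "prime p \<Longrightarrow> (zpoly_delta p \<sigma> ^^ k) (Xv i) = Xv ((\<sigma> ^^ k) i)"
  by (induction k) (simp_all add: zpoly_delta_Xv)

lemma zpoly_delta_zpoly_frob:
  assumes "prime p"
  shows "zpoly_delta p \<sigma> (zpoly_frob p \<sigma> P) = zpoly_frob p \<sigma> (zpoly_delta p \<sigma> P)"
proof -
  let ?D = "zpoly_delta p \<sigma>" and ?F = "zpoly_frob p \<sigma>"
  have "of_nat p * ?D (?F P) = ?F (?F P - P ^ p)"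
    by (simp add: zpoly_delta_eq[OF assms] ring_hom_diff[OF is_ring_hom_zpoly_frob]
        ring_hom_power[OF is_ring_hom_zpoly_frob])
  also have "\<dots> = of_nat p * ?F (?D P)"
    by (simp flip: zpoly_delta_eq[OF assms]
        add: ring_hom_mult[OF is_ring_hom_zpoly_frob] ring_hom_of_nat[OF is_ring_hom_zpoly_frob])
  finally show ?thesis
    using prime_gt_0_nat[OF assms] by simp
qed

lemma mem_delta_ideal_zpoly_cancel_of_nat:
  assumes "prime p" and "of_nat c * P \<in> delta_ideal (zpoly_delta p \<sigma>) k (Xv j)" and "c > 0"
  shows "P \<in> delta_ideal (zpoly_delta p \<sigma>) k (Xv j)"
proof -
  have eq: "delta_ideal (zpoly_delta p \<sigma>) k (Xv j) = ideal_gen (Xv ` (\<lambda>i. (\<sigma> ^^ i) j) ` {..<k})"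
    by (simp add: delta_ideal_def zpoly_delta_iter_Xv[OF assms(1)] image_image)
  show ?thesis
    using assms(2) unfolding eq by (rule mem_ideal_gen_Xv_cancel_of_nat[OF _ assms(3)])
qed

context delta_ring_struct
begin

lemma delta_hom_mpoly_eval:
  assumes v: "\<And>i. \<delta> (v i) = v (\<sigma> i)"
  shows "delta_hom (zpoly_delta p \<sigma>) \<delta> (mpoly_eval v)"
proof -
  interpret Z: delta_ring_struct p "zpoly_delta p \<sigma>"
    by unfold_locales (rule delta_ring_zpoly_delta[OF prime_p])
  let ?h = "mpoly_eval v"
  have h: "is_ring_hom ?h"
    by (rule is_ring_hom_mpoly_eval)
  define commutes where "commutes P \<longleftrightarrow> ?h (zpoly_delta p \<sigma> P) = \<delta> (?h P)" for P
  have add: "commutes (a + b)" if "commutes a" "commutes b" for a b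
    using that unfolding commutes_def
    by (simp add: ring_hom_simps[OF h] delta_add Z.delta_add ring_hom_cross_terms[OF h])
  \<comment> \<open>\<delta> a is determined by \<delta> (a + b) and \<delta> b; this takes care of negative constants\<close>
  have cancel: "commutes a" if "commutes (a + b)" "commutes b" for a b
    using that unfolding commutes_def
    by (simp add: ring_hom_simps[OF h] delta_add Z.delta_add ring_hom_cross_terms[OF h])
  have one: "commutes 1"
    by (simp add: commutes_def ring_hom_simps[OF h] delta_one Z.delta_one)
  have "commutes (of_int c)" for c
  proof (induction c rule: int_induct[where k = 0])
    case base
    then show ?case
      by (simp add: commutes_def ring_hom_zero[OF h] delta_zero Z.delta_zero)
  next
    case (step1 i)
    then show ?case
      using add[OF step1(2) one] by simp
  next
    case (step2 i)
    then show ?case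
      using cancel[OF _ one, of "of_int (i - 1)"] by simp
  qed
  moreover have "commutes P" for P
  proof (induction P rule: zpoly_induct)
    case (var i)
    then show ?case
      by (simp add: commutes_def mpoly_eval_Xv zpoly_delta_Xv[OF prime_p] v)
  next
    case (mult a b)
    then show ?case
      unfolding commutes_def by (simp add: ring_hom_simps[OF h] delta_mult Z.delta_mult)
  qed (simp_all add: calculation add)
  then show ?thesis
    by (simp add: delta_hom_def h commutes_def)
qed

lemma delta_frob_commute: "\<delta> (\<phi> x) = \<phi> (\<delta> x)"
proof -
  let ?D = "zpoly_delta p Suc" and ?h = "mpoly_eval (\<lambda>i. (\<delta> ^^ i) x)"
  have h: "delta_hom ?D \<delta> ?h"
    by (rule delta_hom_mpoly_eval) simp
  have delta: "?h (?D P) = \<delta> (?h P)" for P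
    using h by (simp add: delta_hom_def)
  have frob: "?h (frob p ?D P) = \<phi> (?h P)" for P
    by (rule delta_hom_frob[OF h])
  have x: "?h (Xv 0) = x"
    by (simp add: mpoly_eval_Xv)
  have "\<delta> (\<phi> x) = ?h (?D (frob p ?D (Xv 0)))"
    by (simp only: delta frob x)
  also have "\<dots> = ?h (frob p ?D (?D (Xv 0)))"
    by (simp only: frob_zpoly_delta[OF prime_p] zpoly_delta_zpoly_frob[OF prime_p])
  also have "\<dots> = \<phi> (\<delta> x)"
    by (simp only: delta frob x)
  finally show ?thesis .
qed

lemma delta_iter_frob: "(\<delta> ^^ k) (\<phi> x) = \<phi> ((\<delta> ^^ k) x)"
  by (induction k) (simp_all add: delta_frob_commute)

end

section \<open>Ghost components and the Witt coordinates of a sum\<close>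

lemma length_deltaPolys: "length (deltaPolys p n) = Suc n"
  by (induction n) simp_all

lemma nth_deltaPolys: "k \<le> n \<Longrightarrow> deltaPolys p n ! k = deltaPoly p k"
proof (induction n)
  case 0
  then show ?case
    by (simp add: deltaPoly_def)
next
  case (Suc n)
  then show ?case
    by (cases "k = Suc n") (simp_all add: deltaPoly_def nth_append length_deltaPolys)
qed

lemma zpoly_ghost_identity:
  assumes p: "prime p"
  shows "(Phi p ^^ n) (Xv 0) = (\<Sum>k\<le>n. of_nat (p ^ k) * deltaPoly p k ^ p ^ (n - k))"
proof (induction n)
  case 0
  then show ?case
    by (simp add: deltaPoly_def)
next
  case (Suc n)
  let ?F = "zpoly_frob p Suc"
  let ?R = "(Phi p ^^ Suc n) (Xv 0) - (\<Sum>k\<le>n. of_nat (p ^ k) * deltaPoly p k ^ p ^ (Suc n - k))"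
  have "(Phi p ^^ Suc n) (Xv 0) = (\<Sum>k\<le>n. of_nat (p ^ k) * ?F (deltaPoly p k) ^ p ^ (n - k))"
    using Suc by (simp add: Phi_eq_zpoly_frob ring_hom_simps[OF is_ring_hom_zpoly_frob])
  then have R: "?R = (\<Sum>k\<le>n. of_nat (p ^ k) * (?F (deltaPoly p k) ^ p ^ (n - k) - (deltaPoly p k ^ p) ^ p ^ (n - k)))"
    by (simp add: sum_subtractf right_diff_distrib power_mult[symmetric] Suc_diff_le mult.commute)
  \<comment> \<open>the k-th summand is divisible by p^k p^(n-k+1) since F(Q) is congruent to Q^p modulo p\<close>
  have "of_nat (p ^ Suc n) dvd ?R"
    unfolding R
  proof (rule dvd_sum)
    fix k
    assume "k \<in> {..n}"
    then have "p ^ Suc n = p ^ k * p ^ Suc (n - k)"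
      by (simp flip: power_add)
    then have eq: "(of_nat (p ^ Suc n) :: zpoly) = of_nat (p ^ k) * of_nat (p ^ Suc (n - k))"
      by (metis of_nat_mult)
    have "of_nat (p ^ Suc (n - k)) dvd ?F (deltaPoly p k) ^ p ^ (n - k) - (deltaPoly p k ^ p) ^ p ^ (n - k)"
      by (rule of_nat_power_dvd_power_diff) (rule of_nat_prime_dvd_zpoly_frob[OF p])
    then show "of_nat (p ^ Suc n) dvd
        of_nat (p ^ k) * (?F (deltaPoly p k) ^ p ^ (n - k) - (deltaPoly p k ^ p) ^ p ^ (n - k))"
      unfolding eq by (rule mult_dvd_mono[OF dvd_refl])
  qed
  then obtain Q where Q: "?R = of_nat (p ^ Suc n) * Q"
    by (auto simp: dvd_def)
  have "p > 0"
    using p prime_gt_0_nat by blast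
  have "(\<Sum>k\<le>n. of_nat (p ^ k) * (deltaPolys p n ! k) ^ p ^ (Suc n - k)) =
      (\<Sum>k\<le>n. of_nat (p ^ k) * deltaPoly p k ^ p ^ (Suc n - k))"
    by (rule sum.cong) (simp_all add: nth_deltaPolys)
  then have "deltaPoly p (Suc n) = (THE Q. of_nat (p ^ Suc n) * Q = ?R)"
    unfolding deltaPoly_def[of p "Suc n"] by (simp add: nth_append length_deltaPolys)
  moreover have "of_nat (p ^ Suc n) * (THE Q. of_nat (p ^ Suc n) * Q = ?R) = ?R"
    by (rule theI[of _ Q]) (use Q \<open>p > 0\<close> in auto)
  ultimately show ?case
    by (simp add: algebra_simps)
qed

context delta_ring_struct
begin

lemma ghost_identity: "(\<phi> ^^ n) x = (\<Sum>k\<le>n. of_nat (p ^ k) * delta_k p \<delta> k x ^ p ^ (n - k))"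
proof -
  let ?D = "zpoly_delta p Suc" and ?h = "mpoly_eval (\<lambda>i. (\<delta> ^^ i) x)"
  have h: "delta_hom ?D \<delta> ?h"
    by (rule delta_hom_mpoly_eval) simp
  have "(\<phi> ^^ n) x = ?h ((frob p ?D ^^ n) (Xv 0))"
    by (simp add: delta_hom_frob_iter[OF h] mpoly_eval_Xv)
  also have "\<dots> = ?h (\<Sum>k\<le>n. of_nat (p ^ k) * deltaPoly p k ^ p ^ (n - k))"
    by (simp add: frob_zpoly_delta[OF prime_p] zpoly_ghost_identity[OF prime_p] flip: Phi_eq_zpoly_frob)
  also have "\<dots> = (\<Sum>k\<le>n. of_nat (p ^ k) * delta_k p \<delta> k x ^ p ^ (n - k))"
    by (simp add: ring_hom_simps[OF delta_hom_ring_hom[OF h]] delta_k_def)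
  finally show ?thesis .
qed

lemma ghost_identity_last:
  "of_nat (p ^ k) * delta_k p \<delta> k x =
    (\<phi> ^^ k) x - (\<Sum>i<k. of_nat (p ^ i) * delta_k p \<delta> i x ^ p ^ (k - i))"
  using ghost_identity[of k x] by (simp add: lessThan_Suc_atMost[symmetric])

end

lemma zpoly_delta_k_add:
  fixes \<sigma> :: "nat \<Rightarrow> nat" and D :: "zpoly \<Rightarrow> zpoly"
  assumes p: "prime p"
  defines "D \<equiv> zpoly_delta p \<sigma>"
  shows "delta_k p D k (Xv i + Xv j) - delta_k p D k (Xv i) \<in> delta_ideal D (Suc k) (Xv j)"
proof (induction k rule: less_induct)
  case (less k)
  interpret Z: delta_ring_struct p D
    unfolding D_def by unfold_locales (rule delta_ring_zpoly_delta[OF p])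
  let ?x = "Xv i" and ?y = "Xv j" and ?V = "delta_ideal D (Suc k) (Xv j)"
  have V: "is_ideal ?V"
    by (rule is_ideal_delta_ideal)
  have "of_nat (p ^ k) * (delta_k p D k (?x + ?y) - delta_k p D k ?x) = (Z.\<phi> ^^ k) ?y -
      (\<Sum>l<k. of_nat (p ^ l) * (delta_k p D l (?x + ?y) ^ p ^ (k - l) - delta_k p D l ?x ^ p ^ (k - l)))"
    by (simp del: of_nat_power add: right_diff_distrib Z.ghost_identity_last
        ring_hom_add[OF Z.is_ring_hom_frob_iter] sum_subtractf algebra_simps)
  also have "\<dots> \<in> ?V"
  proof (rule ideal_diff[OF V])
    show "(Z.\<phi> ^^ k) ?y \<in> ?V"
      by (rule Z.frob_iter_mem_delta_ideal)
    have "delta_k p D l (?x + ?y) - delta_k p D l ?x \<in> ?V" if "l < k" for l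
      using less[OF that] delta_ideal_mono[of "Suc l" "Suc k" D ?y] that by auto
    then show "(\<Sum>l<k. of_nat (p ^ l) *
        (delta_k p D l (?x + ?y) ^ p ^ (k - l) - delta_k p D l ?x ^ p ^ (k - l))) \<in> ?V"
      by (intro ideal_sum[OF V] ideal_mult_left[OF V] ideal_power_diff[OF V]) simp
  qed
  \<comment> \<open>zpoly modulo an ideal generated by variables is torsion-free, so p^k cancels\<close>
  finally show ?case
    unfolding D_def by (rule mem_delta_ideal_zpoly_cancel_of_nat[OF p]) (use p prime_gt_0_nat in simp)
qed

context delta_ring_struct
begin

lemma delta_k_add: "delta_k p \<delta> k (x + a) - delta_k p \<delta> k x \<in> delta_ideal \<delta> (Suc k) a"
proof -
  define \<sigma> where "\<sigma> j = j + 2" for j :: nat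
  define v where "v j = (\<delta> ^^ (j div 2)) (if even j then x else a)" for j
  let ?D = "zpoly_delta p \<sigma>" and ?h = "mpoly_eval v"
  have h: "delta_hom ?D \<delta> ?h"
    by (rule delta_hom_mpoly_eval) (simp add: v_def \<sigma>_def)
  have hx: "?h (Xv 0) = x" and ha: "?h (Xv 1) = a"
    by (simp_all add: mpoly_eval_Xv v_def)
  have "?h (delta_k p ?D k (Xv 0 + Xv 1) - delta_k p ?D k (Xv 0)) \<in> ?h ` delta_ideal ?D (Suc k) (Xv 1)"
    using zpoly_delta_k_add[OF prime_p] by (rule imageI)
  also have "\<dots> \<subseteq> delta_ideal \<delta> (Suc k) a"
    using delta_hom_image_delta_ideal[OF h, of "Suc k" "Xv 1"] by (simp only: ha)
  finally show ?thesis
    by (simp only: ring_hom_diff[OF delta_hom_ring_hom[OF h]] ring_hom_add[OF delta_hom_ring_hom[OF h]]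
        delta_hom_delta_k[OF h] hx ha)
qed

end

section \<open>The ideals generated by Frobenius twists of I\<close>

locale delta_ring_ideal = delta_ring_struct p \<delta> for p and \<delta> :: "'a::comm_ring_1 \<Rightarrow> 'a" +
  fixes I :: "'a set"
  assumes is_ideal_I: "is_ideal I"
begin

definition frob_prods :: "nat \<Rightarrow> nat \<Rightarrow> 'a set" where
  "frob_prods m N = {\<Prod>i\<in>{m..N}. (\<phi> ^^ i) (b i) | b. \<forall>i. b i \<in> I}"

text \<open>
  Iprod m N is the ideal \<phi>^m(I) \<phi>^(m+1)(I) ... \<phi>^N(I) A; the product is empty,
  so that Iprod m N is the unit ideal, when N < m.
\<close>
definition Iprod :: "nat \<Rightarrow> nat \<Rightarrow> 'a set" where
  "Iprod m N = ideal_gen (frob_prods m N)"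

lemma is_ideal_Iprod: "is_ideal (Iprod m N)"
  by (simp add: Iprod_def is_ideal_ideal_gen)

lemma frob_prods_eq_left:
  assumes "m \<le> N"
  shows "frob_prods m N = {(\<phi> ^^ m) b * s | b s. b \<in> I \<and> s \<in> frob_prods (Suc m) N}"
proof (intro set_eqI iffI)
  fix z
  assume "z \<in> frob_prods m N"
  then obtain b where b: "\<forall>i. b i \<in> I" and z: "z = (\<Prod>i\<in>{m..N}. (\<phi> ^^ i) (b i))"
    by (auto simp: frob_prods_def)
  then have "z = (\<phi> ^^ m) (b m) * (\<Prod>i\<in>{Suc m..N}. (\<phi> ^^ i) (b i))"
    using assms by (simp add: prod.atLeast_Suc_atMost)
  moreover have "(\<Prod>i\<in>{Suc m..N}. (\<phi> ^^ i) (b i)) \<in> frob_prods (Suc m) N"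
    using b by (auto simp: frob_prods_def)
  ultimately show "z \<in> {(\<phi> ^^ m) b * s | b s. b \<in> I \<and> s \<in> frob_prods (Suc m) N}"
    using b by blast
next
  fix z
  assume "z \<in> {(\<phi> ^^ m) b * s | b s. b \<in> I \<and> s \<in> frob_prods (Suc m) N}"
  then obtain c b where c: "c \<in> I" and b: "\<forall>i. b i \<in> I"
    and z: "z = (\<phi> ^^ m) c * (\<Prod>i\<in>{Suc m..N}. (\<phi> ^^ i) (b i))"
    by (auto simp: frob_prods_def)
  have "(\<Prod>i\<in>{Suc m..N}. (\<phi> ^^ i) ((b(m := c)) i)) = (\<Prod>i\<in>{Suc m..N}. (\<phi> ^^ i) (b i))"
    by (rule prod.cong) auto
  then have "z = (\<Prod>i\<in>{m..N}. (\<phi> ^^ i) ((b(m := c)) i))"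
    using assms by (simp add: z prod.atLeast_Suc_atMost)
  moreover have "\<forall>i. (b(m := c)) i \<in> I"
    using b c by simp
  ultimately show "z \<in> frob_prods m N"
    unfolding frob_prods_def by blast
qed

lemma frob_prods_Suc_right:
  "frob_prods 0 (Suc N) = {s * t | s t. s \<in> frob_prods 0 N \<and> t \<in> (\<phi> ^^ Suc N) ` I}"
proof (intro set_eqI iffI)
  fix z
  assume "z \<in> frob_prods 0 (Suc N)"
  then obtain b where b: "\<forall>i. b i \<in> I" and z: "z = (\<Prod>i\<in>{0..Suc N}. (\<phi> ^^ i) (b i))"
    by (auto simp: frob_prods_def)
  then have "z = (\<Prod>i\<in>{0..N}. (\<phi> ^^ i) (b i)) * (\<phi> ^^ Suc N) (b (Suc N))"
    by (simp add: prod.atLeast0_atMost_Suc)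
  moreover have "(\<Prod>i\<in>{0..N}. (\<phi> ^^ i) (b i)) \<in> frob_prods 0 N"
    using b by (auto simp: frob_prods_def)
  ultimately show "z \<in> {s * t | s t. s \<in> frob_prods 0 N \<and> t \<in> (\<phi> ^^ Suc N) ` I}"
    using b by blast
next
  fix z
  assume "z \<in> {s * t | s t. s \<in> frob_prods 0 N \<and> t \<in> (\<phi> ^^ Suc N) ` I}"
  then obtain b c where b: "\<forall>i. b i \<in> I" and c: "c \<in> I"
    and z: "z = (\<Prod>i\<in>{0..N}. (\<phi> ^^ i) (b i)) * (\<phi> ^^ Suc N) c"
    by (auto simp: frob_prods_def)
  have "(\<Prod>i\<in>{0..N}. (\<phi> ^^ i) ((b(Suc N := c)) i)) = (\<Prod>i\<in>{0..N}. (\<phi> ^^ i) (b i))"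
    by (rule prod.cong) auto
  then have "z = (\<Prod>i\<in>{0..Suc N}. (\<phi> ^^ i) ((b(Suc N := c)) i))"
    by (simp add: z prod.atLeast0_atMost_Suc)
  moreover have "\<forall>i. (b(Suc N := c)) i \<in> I"
    using b c by simp
  ultimately show "z \<in> frob_prods 0 (Suc N)"
    unfolding frob_prods_def by blast
qed

lemma frob_iter_image_frob_prods: "(\<phi> ^^ j) ` frob_prods m N = frob_prods (m + j) (N + j)"
proof (intro set_eqI iffI)
  have frob_iter_frob_iter: "(\<phi> ^^ j) ((\<phi> ^^ i) y) = (\<phi> ^^ (i + j)) y" for i y
    by (metis add.commute comp_apply funpow_add)
  have shift: "(\<phi> ^^ j) (\<Prod>i\<in>{m..N}. (\<phi> ^^ i) (b i)) = (\<Prod>i\<in>{m + j..N + j}. (\<phi> ^^ i) (b (i - j)))" for b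
    by (simp add: ring_hom_prod[OF is_ring_hom_frob_iter] prod.shift_bounds_cl_nat_ivl frob_iter_frob_iter)
  fix z
  {
    assume "z \<in> (\<phi> ^^ j) ` frob_prods m N"
    then obtain b where "\<forall>i. b i \<in> I" and "z = (\<phi> ^^ j) (\<Prod>i\<in>{m..N}. (\<phi> ^^ i) (b i))"
      by (auto simp: frob_prods_def)
    then show "z \<in> frob_prods (m + j) (N + j)"
      unfolding frob_prods_def shift by (auto intro!: exI[of _ "\<lambda>i. b (i - j)"])
  next
    assume "z \<in> frob_prods (m + j) (N + j)"
    then obtain b where b: "\<forall>i. b i \<in> I" and z: "z = (\<Prod>i\<in>{m + j..N + j}. (\<phi> ^^ i) (b i))"
      by (auto simp: frob_prods_def)
    then have "z = (\<phi> ^^ j) (\<Prod>i\<in>{m..N}. (\<phi> ^^ i) (b (i + j)))"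
      by (simp add: shift)
    moreover have "\<forall>i. b (i + j) \<in> I"
      using b by simp
    ultimately show "z \<in> (\<phi> ^^ j) ` frob_prods m N"
      unfolding frob_prods_def by (auto intro!: imageI exI[of _ "\<lambda>i. b (i + j)"])
  }
qed

lemma Iprod_empty: "N < m \<Longrightarrow> Iprod m N = UNIV"
proof -
  assume "N < m"
  then have "1 \<in> frob_prods m N"
    unfolding frob_prods_def using ideal_zero[OF is_ideal_I] by (intro CollectI exI[of _ "\<lambda>_. 0"]) auto
  then have "1 \<in> Iprod m N"
    unfolding Iprod_def using ideal_gen_subset by blast
  then have "x \<in> Iprod m N" for x
    using ideal_mult_left[OF is_ideal_Iprod, of 1 m N x] by simp
  then show ?thesis
    by blast
qed

lemma Iseq_eq_Iprod: "Iseq p \<delta> I N = Iprod 0 N"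
proof (induction N)
  case 0
  have "frob_prods 0 0 = I"
  proof (intro set_eqI iffI)
    fix y
    assume "y \<in> I"
    then show "y \<in> frob_prods 0 0"
      unfolding frob_prods_def by (intro CollectI exI[of _ "\<lambda>_. y"]) auto
  qed (auto simp: frob_prods_def)
  then show ?case
    by (simp add: Iprod_def ideal_gen_ideal[OF is_ideal_I])
next
  case (Suc N)
  then show ?case
    by (simp add: Iprod_def ideal_prod_ideal_gen frob_prods_Suc_right)
qed

lemma ideal_gen_frob_iter_Iseq: "ideal_gen ((\<phi> ^^ m) ` Iseq p \<delta> I n) = Iprod m (m + n)"
  by (simp add: Iseq_eq_Iprod Iprod_def ideal_gen_ring_hom_image_ideal_gen[OF is_ring_hom_frob_iter]
      frob_iter_image_frob_prods add.commute)

lemma frob_image_Iprod: "\<phi> ` Iprod m N \<subseteq> Iprod (Suc m) (Suc N)"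
  using ring_hom_image_ideal_gen[OF is_ring_hom_frob, of "frob_prods m N"]
    frob_iter_image_frob_prods[of 1 m N]
  by (simp add: Iprod_def)

lemma frob_iter_mult_mem_Iprod:
  assumes "b \<in> I" and "m \<le> N" and "u \<in> Iprod (Suc m) N"
  shows "(\<phi> ^^ m) b * u \<in> Iprod m N"
proof -
  have "frob_prods (Suc m) N \<subseteq> {u. (\<phi> ^^ m) b * u \<in> Iprod m N}"
  proof
    fix s
    assume "s \<in> frob_prods (Suc m) N"
    then have "(\<phi> ^^ m) b * s \<in> frob_prods m N"
      using assms(1) frob_prods_eq_left[OF assms(2)] by blast
    then show "s \<in> {u. (\<phi> ^^ m) b * u \<in> Iprod m N}"
      unfolding Iprod_def using ideal_gen_subset by blast
  qed
  then have "Iprod (Suc m) N \<subseteq> {u. (\<phi> ^^ m) b * u \<in> Iprod m N}"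
    unfolding Iprod_def[of "Suc m"] by (rule ideal_gen_least[OF is_ideal_preimage_mult[OF is_ideal_Iprod]])
  then show ?thesis
    using assms(3) by blast
qed

lemma Iprod_Suc_subset: "Iprod m N \<subseteq> Iprod (Suc m) N"
proof (cases "m \<le> N")
  case True
  have "frob_prods m N \<subseteq> Iprod (Suc m) N"
  proof
    fix z
    assume "z \<in> frob_prods m N"
    then obtain b s where "z = (\<phi> ^^ m) b * s" and "s \<in> frob_prods (Suc m) N"
      using frob_prods_eq_left[OF True] by blast
    then show "z \<in> Iprod (Suc m) N"
      unfolding Iprod_def using ideal_mult_left[OF is_ideal_ideal_gen] ideal_gen_subset by blast
  qed
  then show ?thesis
    unfolding Iprod_def[of m] by (rule ideal_gen_least[OF is_ideal_Iprod])
next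
  case False
  then show ?thesis
    by (simp add: Iprod_empty)
qed

lemma Iprod_antimono: "m \<le> m' \<Longrightarrow> Iprod m N \<subseteq> Iprod m' N"
  by (induction m' rule: dec_induct) (use Iprod_Suc_subset in blast)+

lemma delta_ideal_subset_Iprod:
  assumes "\<And>i. i \<le> k \<Longrightarrow> (\<delta> ^^ i) z \<in> Iprod i N"
  shows "delta_ideal \<delta> (Suc k) z \<subseteq> Iprod k N"
proof (rule delta_ideal_least[OF is_ideal_Iprod])
  fix i
  assume "i < Suc k"
  then show "(\<delta> ^^ i) z \<in> Iprod k N"
    using assms[of i] Iprod_antimono[of i k N] by auto
qed

end

context delta_ring_ideal
begin

lemma delta_iter_zero: "(\<delta> ^^ k) 0 = 0"
  by (induction k) (simp_all add: delta_zero)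

lemma is_ideal_delta_iter_preimage_Iprod: "is_ideal {z. \<forall>k\<le>N. (\<delta> ^^ k) z \<in> Iprod k N}"
  unfolding is_ideal_def
proof (intro conjI ballI allI; clarsimp)
  show "(\<delta> ^^ k) 0 \<in> Iprod k N" for k
    by (simp add: delta_iter_zero ideal_zero[OF is_ideal_Iprod])
next
  fix x y k
  assume x: "\<forall>k\<le>N. (\<delta> ^^ k) x \<in> Iprod k N" and y: "\<forall>k\<le>N. (\<delta> ^^ k) y \<in> Iprod k N" and "k \<le> N"
  then have "delta_ideal \<delta> (Suc k) y \<subseteq> Iprod k N"
    by (intro delta_ideal_subset_Iprod) simp
  then have "(\<delta> ^^ k) (x + y) - (\<delta> ^^ k) x \<in> Iprod k N"
    using delta_iter_add by blast
  then show "(\<delta> ^^ k) (x + y) \<in> Iprod k N"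
    using x \<open>k \<le> N\<close> ideal_mem_of_diff[OF is_ideal_Iprod] by blast
next
  fix a x k
  assume x: "\<forall>k\<le>N. (\<delta> ^^ k) x \<in> Iprod k N" and "k \<le> N"
  then have "delta_ideal \<delta> (Suc k) x \<subseteq> Iprod k N"
    by (intro delta_ideal_subset_Iprod) simp
  then show "(\<delta> ^^ k) (a * x) \<in> Iprod k N"
    using delta_iter_mult by blast
qed

lemma delta_iter_frob_prods:
  "z \<in> frob_prods 0 N \<Longrightarrow> k \<le> N \<Longrightarrow> (\<delta> ^^ k) z \<in> Iprod k N"
proof (induction N arbitrary: z k)
  case 0
  then show ?case
    by (simp add: Iprod_def ideal_gen_subset[THEN subsetD])
next
  case (Suc M)
  have "frob_prods 0 (Suc M) = {b * s | b s. b \<in> I \<and> s \<in> \<phi> ` frob_prods 0 M}"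
    using frob_prods_eq_left[of 0 "Suc M"] frob_iter_image_frob_prods[of 1 0 M] by simp
  then obtain b w where b: "b \<in> I" and w: "w \<in> frob_prods 0 M" and z: "z = b * \<phi> w"
    using Suc.prems(1) by blast
  have frob_w: "(\<delta> ^^ i) (\<phi> w) \<in> Iprod (Suc i) (Suc M)" if "i \<le> Suc M" for i
  proof (cases "i \<le> M")
    case True
    then show ?thesis
      using Suc.IH[OF w True] frob_image_Iprod by (auto simp: delta_iter_frob)
  qed (use that in \<open>simp add: Iprod_empty\<close>)
  have "delta_ideal \<delta> k (\<phi> w) \<subseteq> Iprod k (Suc M)"
  proof (rule delta_ideal_least[OF is_ideal_Iprod])
    fix i
    assume "i < k"
    then show "(\<delta> ^^ i) (\<phi> w) \<in> Iprod k (Suc M)"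
      using frob_w[of i] Iprod_antimono[of "Suc i" k "Suc M"] Suc.prems(2) by auto
  qed
  then have "(\<delta> ^^ k) z - (\<phi> ^^ k) b * (\<delta> ^^ k) (\<phi> w) \<in> Iprod k (Suc M)"
    using delta_iter_mult_frob_iter[of k b "\<phi> w"] z by blast
  moreover have "(\<phi> ^^ k) b * (\<delta> ^^ k) (\<phi> w) \<in> Iprod k (Suc M)"
    using frob_iter_mult_mem_Iprod[OF b Suc.prems(2) frob_w[OF Suc.prems(2)]] .
  ultimately show ?case
    by (rule ideal_mem_of_diff[OF is_ideal_Iprod])
qed

theorem delta_iter_mem_Iprod:
  assumes "z \<in> Iprod 0 N" and "k \<le> N"
  shows "(\<delta> ^^ k) z \<in> Iprod k N"
proof -
  have "frob_prods 0 N \<subseteq> {z. \<forall>k\<le>N. (\<delta> ^^ k) z \<in> Iprod k N}"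
    using delta_iter_frob_prods by blast
  then have "Iprod 0 N \<subseteq> {z. \<forall>k\<le>N. (\<delta> ^^ k) z \<in> Iprod k N}"
    unfolding Iprod_def[of 0] by (rule ideal_gen_least[OF is_ideal_delta_iter_preimage_Iprod])
  then show ?thesis
    using assms by blast
qed

lemma delta_k_diff_mem_Iprod:
  assumes "x - y \<in> Iprod 0 N" and "k \<le> m" and "m \<le> N"
  shows "delta_k p \<delta> k x - delta_k p \<delta> k y \<in> Iprod m N"
proof -
  have "delta_ideal \<delta> (Suc k) (x - y) \<subseteq> Iprod k N"
    using delta_iter_mem_Iprod[OF assms(1)] assms(2,3) by (intro delta_ideal_subset_Iprod) simp
  also have "\<dots> \<subseteq> Iprod m N"
    using Iprod_antimono[OF assms(2)] .
  finally show ?thesis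
    using delta_k_add[of k y "x - y"] by auto
qed

end

lemma factors_through:
  assumes "\<And>x y. f x = f y \<Longrightarrow> g x = g y"
  shows "\<exists>G. \<forall>x. G (f x) = g x"
proof (intro exI allI)
  fix x
  have "f (SOME y. f y = f x) = f x"
    by (rule someI) (rule refl)
  then show "g (SOME y. f y = f x) = g x"
    by (rule assms)
qed

theorem lemma4p10:
  fixes p :: nat and \<delta> :: "'a::comm_ring_1 \<Rightarrow> 'a" and I :: "'a set" and m n :: nat
  assumes "prism p \<delta> I"
  shows "\<exists>g :: 'a set \<Rightarrow> 'a set list. \<forall>x.
           g (coset (Iseq p \<delta> I (m + n)) x) =
           map (\<lambda>k. coset (ideal_gen ((frob p \<delta> ^^ m) ` Iseq p \<delta> I n)) (delta_k p \<delta> k x)) [0..<Suc m]"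
proof (rule factors_through)
  interpret delta_ring_ideal p \<delta> I
    using assms by unfold_locales (auto simp: prism_def cartier_ideal_def)
  fix x y
  assume "coset (Iseq p \<delta> I (m + n)) x = coset (Iseq p \<delta> I (m + n)) y"
  then have "x - y \<in> Iprod 0 (m + n)"
    by (simp add: Iseq_eq_Iprod coset_eq_iff[OF is_ideal_Iprod])
  then have "coset (Iprod m (m + n)) (delta_k p \<delta> k x) = coset (Iprod m (m + n)) (delta_k p \<delta> k y)"
    if "k \<le> m" for k
    using that by (simp add: coset_eq_iff[OF is_ideal_Iprod] delta_k_diff_mem_Iprod)
  then show "map (\<lambda>k. coset (ideal_gen ((frob p \<delta> ^^ m) ` Iseq p \<delta> I n)) (delta_k p \<delta> k x)) [0..<Suc m] =
      map (\<lambda>k. coset (ideal_gen ((frob p \<delta> ^^ m) ` Iseq p \<delta> I n)) (delta_k p \<delta> k y)) [0..<Suc m]"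
    by (simp add: ideal_gen_frob_iter_Iseq)
qed

end
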